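(* Let $\Gamma$ be a smooth simple closed curve in $\mathbb R^2$ with arclength parameter $\theta\in[0,\ell)$ and curvature $\kappa(\theta)$, let $M_0>0$ be such that Fermi coordinates $\mathbf y=\gamma(\theta)+t\nu(\theta)$, $|t|<M_0$, are valid, and let $u$ be a (classical) solution of $-\epsilon^2\Delta u+[1+\epsilon^2W(\mathbf y)]u-|u|^2u=0$ in $\mathbb R^2$, written $u=u(t,\theta)$, $W=W(t,\theta)$ in these coordinates. Then for every constant $0<M<M_0$ and every $\theta$, with $\kappa=\kappa(\theta)$: $$\epsilon^2\!\int_{-M}^{M}\!(1+\kappa t)u_t^2\,\mathrm dt+\!\int_{-M}^{M}\!(1+\kappa t)[1+\epsilon^2W]u^2\,\mathrm dt-\!\int_{-M}^{M}\!(1+\kappa t)u^4\,\mathrm dt=\epsilon^2\!\int_{-M}^{M}\!u\,\partial_\theta\Big[\tfrac{\partial_\theta u}{1+\kappa t}\Big]\mathrm dt+\epsilon^2(1+\kappa t)uu_t\Big|_{t=-M}^{M},$$ $$\epsilon^2\!\int_{-M}^{M}\!(1+\kappa t)^2W_tu^2\,\mathrm dt+2\kappa\!\int_{-M}^{M}\!(1+\kappa t)[1+\epsilon^2W]u^2\,\mathrm dt-\kappa\!\int_{-M}^{M}\!(1+\kappa t)u^4\,\mathrm dt$$ $$=-2\epsilon^2\!\int_{-M}^{M}\!(1+\kappa t)u_t\,\partial_\theta\Big[\tfrac{\partial_\theta u}{1+\kappa t}\Big]\mathrm dt-\epsilon^2\big[(1+\kappa t)u_t\big]^2\Big|_{-M}^{M}+(1+\kappa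 t)^2[1+\epsilon^2W]u^2\Big|_{-M}^{M}-\tfrac12(1+\kappa t)^2|u|^4\Big|_{-M}^{M},$$ and consequently $$2\epsilon^2\kappa\!\int_{-M}^{M}\!(1+\kappa t)u_t^2\,\mathrm dt-\epsilon^2\!\int_{-M}^{M}\!(1+\kappa t)^2W_tu^2\,\mathrm dt-\kappa\!\int_{-M}^{M}\!(1+\kappa t)u^4\,\mathrm dt$$ $$=2\epsilon^2\!\int_{-M}^{M}\!\partial_t\big[(1+\kappa t)u\big]\,\partial_\theta\Big[\tfrac{\partial_\theta u}{1+\kappa t}\Big]\mathrm dt+2\epsilon^2\kappa(1+\kappa t)uu_t\Big|_{-M}^{M}+\epsilon^2\big[(1+\kappa t)u_t\big]^2\Big|_{-M}^{M}-(1+\kappa t)^2[1+\epsilon^2W]u^2\Big|_{-M}^{M}+\tfrac12(1+\kappa t)^2|u|^4\Big|_{-M}^{M}.$$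
   Context: $\nu$ is the unit outer normal to $\Gamma$. In Fermi coordinates the Laplacian is $\Delta=\frac{1}{1+\kappa t}\partial_t\big[(1+\kappa t)\partial_t\big]+\frac{1}{1+\kappa t}\partial_\theta\big[\frac{1}{1+\kappa t}\partial_\theta\big]$. *)

theory Defs
  imports "HOL-Analysis.Analysis"
begin

definition smooth_curve :: "(real \<Rightarrow> real^2) \<Rightarrow> bool" where
  "smooth_curve g \<longleftrightarrow> (\<exists>D. D 0 = g \<and>
      (\<forall>n x. (D n has_vector_derivative D (Suc n) x) (at x)))"

definition pderiv2 :: "real^2 \<Rightarrow> (real^2 \<Rightarrow> real) \<Rightarrow> real^2 \<Rightarrow> real" where
  "pderiv2 i f y = deriv (\<lambda>s. f (y + s *\<^sub>R i)) 0"

definition C1_R2 :: "(real^2 \<Rightarrow> real) \<Rightarrow> bool" where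
  "C1_R2 f \<longleftrightarrow> (\<forall>y. f differentiable (at y)) \<and>
      (\<forall>i\<in>Basis. continuous_on UNIV (pderiv2 i f))"

definition C2_R2 :: "(real^2 \<Rightarrow> real) \<Rightarrow> bool" where
  "C2_R2 f \<longleftrightarrow> C1_R2 f \<and> (\<forall>i\<in>Basis. C1_R2 (pderiv2 i f))"

definition laplacian2 :: "(real^2 \<Rightarrow> real) \<Rightarrow> real^2 \<Rightarrow> real" where
  "laplacian2 f y = (\<Sum>i\<in>Basis. pderiv2 i (pderiv2 i f) y)"

definition fermi :: "(real \<Rightarrow> real^2) \<Rightarrow> (real \<Rightarrow> real^2) \<Rightarrow> (real^2 \<Rightarrow> 'a) \<Rightarrow> real \<Rightarrow> real \<Rightarrow> 'a" where
  "fermi g nu f t \<theta> = f (g \<theta> + t *\<^sub>R nu \<theta>)"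

definition evalb :: "(real \<Rightarrow> real) \<Rightarrow> real \<Rightarrow> real \<Rightarrow> real" where
  "evalb f a b = f b - f a"

end

theory Submission
  imports Defs "HOL-Library.Periodic_Fun"
begin

text \<open>
  In Fermi coordinates \<open>(1 + \<kappa> t) \<Delta>u = \<partial>\<^sub>t((1 + \<kappa> t) \<partial>\<^sub>t u) + \<partial>\<^sub>\<theta>(\<partial>\<^sub>\<theta> u / (1 + \<kappa> t))\<close>, so along the
  normal line through \<open>\<gamma> \<theta>\<close> the equation becomes an ODE in \<open>t\<close> with the tangential term
  \<open>D t = \<partial>\<^sub>\<theta>(\<partial>\<^sub>\<theta> u / (1 + \<kappa> t))\<close> as a source. Multiplying it by \<open>U\<close> and by \<open>(1 + \<kappa> t) U'\<close> and
  integrating over \<open>[-M, M]\<close> gives the first two identities; the third is \<open>2 \<kappa>\<close> times the first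
  minus the second.

  The computation of \<open>D\<close> needs \<open>\<nu>\<close> to be differentiable near \<open>\<theta>\<close>, with \<open>\<nu>' = \<kappa> \<gamma>'\<close>. A priori
  \<open>\<nu>\<close> is only, pointwise, one of the two unit normals \<open>\<plusminus>rot \<gamma>'\<close>. The sign is locally
  constant: by the Jordan curve theorem and invariance of domain, one side of the injective
  Fermi tube near \<open>\<gamma> \<theta>\<close> lies inside the curve, whereas \<open>\<nu>\<close> points outside everywhere.
\<close>

definition rot :: "real^2 \<Rightarrow> real^2" where
  "rot v = vector [- v$2, v$1]"

lemma rot_nth [simp]: "rot v $ 1 = - v$2" "rot v $ 2 = v$1"
  by (simp_all add: rot_def)

lemma rot_scaleR: "rot (c *\<^sub>R v) = c *\<^sub>R rot v"
  by (simp add: vec_eq_iff forall_2)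

lemma rot_uminus: "rot (- v) = - rot v"
  by (simp add: vec_eq_iff forall_2)

lemma rot_rot: "rot (rot v) = - v"
  by (simp add: vec_eq_iff forall_2)

lemma bounded_linear_rot: "bounded_linear rot"
  by (auto intro!: linearI simp: vec_eq_iff forall_2 linear_conv_bounded_linear[symmetric])

lemma vec2_eqI: "(x::real^2) $ 1 = y $ 1 \<Longrightarrow> x $ 2 = y $ 2 \<Longrightarrow> x = y"
  by (simp add: vec_eq_iff forall_2)

lemma unit_orthogonal_eq_rot:
  fixes v w :: "real^2"
  assumes "norm v = 1" "norm w = 1" "v \<bullet> w = 0"
  shows "v = rot w \<or> v = - rot w"
proof -
  have sq: "(norm x)\<^sup>2 = (x$1)\<^sup>2 + (x$2)\<^sup>2" for x :: "real^2"
    unfolding power2_norm_eq_inner by (simp add: inner_vec_def sum_2 power2_eq_square)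
  have v: "(v$1)\<^sup>2 + (v$2)\<^sup>2 = 1" and w: "(w$1)\<^sup>2 + (w$2)\<^sup>2 = 1"
    using sq[of v] sq[of w] assms(1,2) by simp_all
  have vw: "v$1 * w$1 + v$2 * w$2 = 0"
    using assms(3) by (simp add: inner_vec_def sum_2)
  define l where "l = v$2 * w$1 - v$1 * w$2"
  have "v$1 = - l * w$2" "v$2 = l * w$1"
    unfolding l_def using w vw by algebra+
  then have vl: "v = l *\<^sub>R rot w"
    by (intro vec2_eqI) simp_all
  have "l\<^sup>2 = 1"
    using v w unfolding vl by (simp add: algebra_simps power_mult_distrib) algebra
  then show ?thesis
    using vl by (auto simp: power2_eq_1_iff)
qed

lemma orthonormal_pair_resolution_of_identity:
  fixes N T :: "real^2"
  assumes "norm N = 1" "norm T = 1" "N \<bullet> T = 0"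
  shows "N$1 * N$1 + T$1 * T$1 = 1" "N$2 * N$2 + T$2 * T$2 = 1" "N$1 * N$2 + T$1 * T$2 = 0"
proof -
  have T: "(T$1)\<^sup>2 + (T$2)\<^sup>2 = 1"
    using assms(2) unfolding norm_eq_1 by (simp add: inner_vec_def sum_2 power2_eq_square)
  from unit_orthogonal_eq_rot[OF assms] consider "N = rot T" | "N = - rot T"
    by blast
  then show "N$1 * N$1 + T$1 * T$1 = 1" "N$2 * N$2 + T$2 * T$2 = 1" "N$1 * N$2 + T$1 * T$2 = 0"
    using T by (cases; simp add: power2_eq_square algebra_simps)+
qed

lemma pderiv2_eq_frechet:
  assumes "(f has_derivative f') (at y)"
  shows "pderiv2 v f y = f' v"
proof -
  have "((\<lambda>s. y + s *\<^sub>R v) has_derivative (\<lambda>s. s *\<^sub>R v)) (at 0)"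
    by (auto intro!: derivative_eq_intros)
  then have "((\<lambda>s. f (y + s *\<^sub>R v)) has_derivative (\<lambda>s. f' (s *\<^sub>R v))) (at 0)"
    using has_derivative_compose[of "\<lambda>s. y + s *\<^sub>R v" _ 0 UNIV f f'] assms by simp
  moreover have "(\<lambda>s. f' (s *\<^sub>R v)) = (\<lambda>s. f' v * s)"
    using linear_scale[OF has_derivative_linear[OF assms]] by (auto simp: mult.commute)
  ultimately show ?thesis
    unfolding pderiv2_def by (intro DERIV_imp_deriv) (simp add: has_field_derivative_def)
qed

lemma has_derivative_pderiv2:
  assumes "f differentiable (at y)"
  shows "(f has_derivative (\<lambda>v. pderiv2 v f y)) (at y)"
proof -
  obtain f' where f': "(f has_derivative f') (at y)"
    using assms unfolding differentiable_def by blast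
  moreover have "f' = (\<lambda>v. pderiv2 v f y)"
    using pderiv2_eq_frechet[OF f'] by auto
  ultimately show ?thesis by simp
qed

lemma linear_pderiv2: "f differentiable (at y) \<Longrightarrow> linear (\<lambda>v. pderiv2 v f y)"
  by (rule has_derivative_linear[OF has_derivative_pderiv2])

lemma pderiv2_scaleR: "f differentiable (at y) \<Longrightarrow> pderiv2 (c *\<^sub>R v) f y = c * pderiv2 v f y"
  using linear_scale[OF linear_pderiv2] by simp

lemma pderiv2_basis_expansion:
  assumes "f differentiable (at y)"
  shows "pderiv2 v f y = v$1 * pderiv2 (axis 1 1) f y + v$2 * pderiv2 (axis 2 1) f y"
proof -
  have "v = v$1 *\<^sub>R axis 1 1 + v$2 *\<^sub>R axis 2 1"
    by (simp add: vec_eq_iff forall_2 axis_def)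
  then have "pderiv2 v f y = pderiv2 (v$1 *\<^sub>R axis 1 1 + v$2 *\<^sub>R axis 2 1) f y"
    by simp
  also have "\<dots> = v$1 * pderiv2 (axis 1 1) f y + v$2 * pderiv2 (axis 2 1) f y"
    by (simp add: linear_add[OF linear_pderiv2[OF assms]] pderiv2_scaleR[OF assms])
  finally show ?thesis .
qed

lemma pderiv2_chain_rule:
  assumes "f differentiable (at (c x))" and "(c has_vector_derivative v) (at x)"
  shows "((\<lambda>s. f (c s)) has_real_derivative pderiv2 v f (c x)) (at x)"
proof -
  have "((\<lambda>s. f (c s)) has_derivative (\<lambda>h. pderiv2 (h *\<^sub>R v) f (c x))) (at x)"
    using has_derivative_compose[OF assms(2)[unfolded has_vector_derivative_def] has_derivative_pderiv2[OF assms(1)]]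
    by (simp add: comp_def)
  then show ?thesis
    unfolding has_field_derivative_def by (simp add: pderiv2_scaleR[OF assms(1)] mult.commute[of _ "pderiv2 v f (c x)"])
qed

lemma pderiv2_lincomb:
  assumes "f differentiable (at y)" "g differentiable (at y)"
  shows "pderiv2 v (\<lambda>z. a * f z + b * g z) y = a * pderiv2 v f y + b * pderiv2 v g y"
  by (rule pderiv2_eq_frechet)
    (auto intro!: derivative_eq_intros has_derivative_pderiv2 assms)

lemma C1_R2_differentiable: "C1_R2 f \<Longrightarrow> f differentiable (at y)"
  by (simp add: C1_R2_def)

lemma C1_R2_continuous_pderiv2:
  assumes "C1_R2 f"
  shows "continuous_on UNIV (pderiv2 v f)"
proof -
  have "pderiv2 v f = (\<lambda>y. v$1 * pderiv2 (axis 1 1) f y + v$2 * pderiv2 (axis 2 1) f y)"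
    using pderiv2_basis_expansion[OF C1_R2_differentiable[OF assms]] by (intro ext)
  moreover have "continuous_on UNIV (pderiv2 (axis i 1) f)" for i
    using assms by (auto simp: C1_R2_def)
  ultimately show ?thesis
    by (simp add: continuous_on_add continuous_on_mult_left)
qed

lemma C2_R2_pderiv2:
  assumes "C2_R2 f"
  shows "C1_R2 (pderiv2 v f)"
proof -
  have C1: "C1_R2 (pderiv2 (axis i 1) f)" for i
    using assms by (auto simp: C2_R2_def)
  note diff = C1_R2_differentiable[OF C1]
  have eq: "pderiv2 v f = (\<lambda>y. v$1 * pderiv2 (axis 1 1) f y + v$2 * pderiv2 (axis 2 1) f y)"
    using pderiv2_basis_expansion C1_R2_differentiable assms unfolding C2_R2_def by (intro ext) blast
  have "pderiv2 w (pderiv2 v f) = (\<lambda>y. v$1 * pderiv2 w (pderiv2 (axis 1 1) f) y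
      + v$2 * pderiv2 w (pderiv2 (axis 2 1) f) y)" for w
    unfolding eq using pderiv2_lincomb[OF diff diff] by (intro ext)
  moreover have "pderiv2 v f differentiable (at y)" for y
    unfolding eq by (intro differentiable_add differentiable_mult differentiable_const diff)
  ultimately show ?thesis
    unfolding C1_R2_def
    by (auto intro!: continuous_on_add continuous_on_mult_left C1_R2_continuous_pderiv2[OF C1])
qed

lemma pderiv2_pderiv2_expansion:
  assumes "C2_R2 f"
  shows "pderiv2 v (pderiv2 w f) y
    = (\<Sum>i\<in>UNIV. \<Sum>j\<in>UNIV. v$i * w$j * pderiv2 (axis i 1) (pderiv2 (axis j 1) f) y)"
proof -
  have C1: "C1_R2 (pderiv2 u f)" for u
    by (rule C2_R2_pderiv2[OF assms])
  note diff = C1_R2_differentiable[OF C1]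
  have eq: "pderiv2 w f = (\<lambda>z. w$1 * pderiv2 (axis 1 1) f z + w$2 * pderiv2 (axis 2 1) f z)"
    using pderiv2_basis_expansion C1_R2_differentiable assms unfolding C2_R2_def by (intro ext) blast
  have "pderiv2 (axis i 1) (pderiv2 w f) y
      = w$1 * pderiv2 (axis i 1) (pderiv2 (axis 1 1) f) y + w$2 * pderiv2 (axis i 1) (pderiv2 (axis 2 1) f) y" for i
    unfolding eq by (rule pderiv2_lincomb[OF diff diff])
  moreover have "pderiv2 v (pderiv2 w f) y
      = v$1 * pderiv2 (axis 1 1) (pderiv2 w f) y + v$2 * pderiv2 (axis 2 1) (pderiv2 w f) y"
    by (rule pderiv2_basis_expansion[OF diff])
  ultimately show ?thesis
    by (simp add: sum_2 algebra_simps)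
qed

lemma laplacian2_orthonormal_frame:
  assumes "C2_R2 f" and "norm N = 1" "norm T = 1" "N \<bullet> T = 0"
  shows "laplacian2 f y = pderiv2 N (pderiv2 N f) y + pderiv2 T (pderiv2 T f) y"
proof -
  let ?H = "\<lambda>i j. pderiv2 (axis i 1) (pderiv2 (axis j 1) f) y"
  have B: "(Basis :: (real^2) set) = {axis 1 1, axis 2 1}"
    by (auto simp: Basis_vec_def UNIV_2)
  have "laplacian2 f y = ?H 1 1 + ?H 2 2"
    unfolding laplacian2_def B by (simp add: axis_eq_axis)
  moreover have "pderiv2 N (pderiv2 N f) y + pderiv2 T (pderiv2 T f) y
      = (N$1 * N$1 + T$1 * T$1) * ?H 1 1 + (N$1 * N$2 + T$1 * T$2) * (?H 1 2 + ?H 2 1)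
        + (N$2 * N$2 + T$2 * T$2) * ?H 2 2"
    unfolding pderiv2_pderiv2_expansion[OF assms(1), of N N] pderiv2_pderiv2_expansion[OF assms(1), of T T]
    by (simp add: sum_2 algebra_simps)
  ultimately show ?thesis
    using orthonormal_pair_resolution_of_identity[OF assms(2-4)] by simp
qed

lemma pderiv2_moving_chain_rule:
  assumes f: "C2_R2 f"
    and T: "(T has_vector_derivative T') (at x)" and \<Phi>: "(\<Phi> has_vector_derivative V) (at x)"
  shows "((\<lambda>\<phi>. pderiv2 (T \<phi>) f (\<Phi> \<phi>)) has_real_derivative
           pderiv2 T' f (\<Phi> x) + pderiv2 V (pderiv2 (T x) f) (\<Phi> x)) (at x)"
proof -
  have fd: "f differentiable (at y)" for y
    using f by (simp add: C2_R2_def C1_R2_def)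
  note C1 = C2_R2_pderiv2[OF f]
  note Gd = C1_R2_differentiable[OF C1]
  have dT: "((\<lambda>\<phi>. T \<phi> $ i) has_real_derivative T' $ i) (at x)" for i
    using bounded_linear.has_vector_derivative[OF bounded_linear_vec_nth T]
    by (simp add: has_real_derivative_iff_has_vector_derivative)
  have dG: "((\<lambda>\<phi>. pderiv2 (axis i 1) f (\<Phi> \<phi>)) has_real_derivative pderiv2 V (pderiv2 (axis i 1) f) (\<Phi> x)) (at x)" for i
    by (rule pderiv2_chain_rule[OF Gd \<Phi>])
  have "((\<lambda>\<phi>. T \<phi> $ 1 * pderiv2 (axis 1 1) f (\<Phi> \<phi>) + T \<phi> $ 2 * pderiv2 (axis 2 1) f (\<Phi> \<phi>)) has_real_derivative
      (T' $ 1 * pderiv2 (axis 1 1) f (\<Phi> x) + T' $ 2 * pderiv2 (axis 2 1) f (\<Phi> x))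
      + (T x $ 1 * pderiv2 V (pderiv2 (axis 1 1) f) (\<Phi> x) + T x $ 2 * pderiv2 V (pderiv2 (axis 2 1) f) (\<Phi> x))) (at x)"
    by (auto intro!: derivative_eq_intros dT dG simp: algebra_simps)
  moreover have "pderiv2 (T \<phi>) f (\<Phi> \<phi>) = T \<phi> $ 1 * pderiv2 (axis 1 1) f (\<Phi> \<phi>) + T \<phi> $ 2 * pderiv2 (axis 2 1) f (\<Phi> \<phi>)" for \<phi>
    by (rule pderiv2_basis_expansion[OF fd])
  moreover have "pderiv2 T' f (\<Phi> x) = T' $ 1 * pderiv2 (axis 1 1) f (\<Phi> x) + T' $ 2 * pderiv2 (axis 2 1) f (\<Phi> x)"
    by (rule pderiv2_basis_expansion[OF fd])
  moreover have "pderiv2 V (pderiv2 (T x) f) (\<Phi> x)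
      = T x $ 1 * pderiv2 V (pderiv2 (axis 1 1) f) (\<Phi> x) + T x $ 2 * pderiv2 V (pderiv2 (axis 2 1) f) (\<Phi> x)"
  proof -
    have "pderiv2 (T x) f = (\<lambda>z. T x $ 1 * pderiv2 (axis 1 1) f z + T x $ 2 * pderiv2 (axis 2 1) f z)"
      using pderiv2_basis_expansion[OF fd] by (intro ext)
    then show ?thesis
      using pderiv2_lincomb[OF Gd Gd] by simp
  qed
  ultimately show ?thesis
    by simp
qed

lemma has_real_derivative_along_line:
  assumes "f differentiable (at (p + s *\<^sub>R v))"
  shows "((\<lambda>r. f (p + r *\<^sub>R v)) has_real_derivative pderiv2 v f (p + s *\<^sub>R v)) (at s)"
proof -
  have "((\<lambda>r. p + r *\<^sub>R v) has_vector_derivative v) (at s)"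
    by (auto intro!: derivative_eq_intros)
  then show ?thesis
    using pderiv2_chain_rule[of f "\<lambda>r. p + r *\<^sub>R v" s v] assms by simp
qed

lemma deriv_along_line:
  assumes "\<And>y. f differentiable (at y)"
  shows "deriv (\<lambda>r. f (p + r *\<^sub>R v)) = (\<lambda>r. pderiv2 v f (p + r *\<^sub>R v))"
  using has_real_derivative_along_line[OF assms] by (intro ext DERIV_imp_deriv)


lemma C1_R2_along_line:
  assumes "C1_R2 f"
  shows "((\<lambda>r. f (p + r *\<^sub>R v)) has_real_derivative deriv (\<lambda>r. f (p + r *\<^sub>R v)) s) (at s)"
    and "continuous_on S (deriv (\<lambda>r. f (p + r *\<^sub>R v)))"
proof -
  note deriv = deriv_along_line[OF C1_R2_differentiable[OF assms], of p v]
  show "((\<lambda>r. f (p + r *\<^sub>R v)) has_real_derivative deriv (\<lambda>r. f (p + r *\<^sub>R v)) s) (at s)"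
    unfolding deriv by (rule has_real_derivative_along_line[OF C1_R2_differentiable[OF assms]])
  show "continuous_on S (deriv (\<lambda>r. f (p + r *\<^sub>R v)))"
    unfolding deriv
    by (intro continuous_on_compose2[OF C1_R2_continuous_pderiv2[OF assms]] continuous_intros) auto
qed

lemma C2_R2_along_line:
  assumes "C2_R2 f"
  shows "(deriv (\<lambda>r. f (p + r *\<^sub>R v)) has_real_derivative deriv (deriv (\<lambda>r. f (p + r *\<^sub>R v))) s) (at s)"
proof -
  have "deriv (\<lambda>r. f (p + r *\<^sub>R v)) = (\<lambda>r. pderiv2 v f (p + r *\<^sub>R v))"
    using assms by (intro deriv_along_line C1_R2_differentiable) (simp add: C2_R2_def)
  then show ?thesis
    using C1_R2_along_line(1)[OF C2_R2_pderiv2[OF assms]] by simp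
qed

section \<open>The Laplacian in Fermi coordinates\<close>

text \<open>Only what the computation at \<open>\<theta>\<close> uses: \<open>T\<close> is differentiated once, at \<open>\<theta>\<close>, whereas
  \<open>\<gamma>\<close> and \<open>\<nu>\<close> enter through a \<open>\<phi>\<close>-derivative that is itself differentiated at \<open>\<theta>\<close>.\<close>

locale fermi_frame =
  fixes \<gamma> T \<nu> :: "real \<Rightarrow> real^2" and \<kappa> :: "real \<Rightarrow> real" and \<theta> \<eta> :: real
  assumes radius_pos: "\<eta> > 0"
    and tangent: "\<And>\<phi>. \<phi> \<in> ball \<theta> \<eta> \<Longrightarrow> (\<gamma> has_vector_derivative T \<phi>) (at \<phi>)"
    and tangent_deriv: "(T has_vector_derivative - \<kappa> \<theta> *\<^sub>R \<nu> \<theta>) (at \<theta>)"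
    and normal_deriv: "\<And>\<phi>. \<phi> \<in> ball \<theta> \<eta> \<Longrightarrow> (\<nu> has_vector_derivative \<kappa> \<phi> *\<^sub>R T \<phi>) (at \<phi>)"
    and tangent_unit: "norm (T \<theta>) = 1" and normal_unit: "norm (\<nu> \<theta>) = 1"
    and normal_tangent: "\<nu> \<theta> \<bullet> T \<theta> = 0"
begin

lemma tangential_derivative:
  assumes u: "C2_R2 u" and jac: "\<And>\<phi>. \<phi> \<in> ball \<theta> \<eta> \<Longrightarrow> 1 + \<kappa> \<phi> * t \<noteq> 0"
  shows "deriv (\<lambda>\<phi>. deriv (\<lambda>\<psi>. fermi \<gamma> \<nu> u t \<psi>) \<phi> / (1 + \<kappa> \<phi> * t)) \<theta>
    = (1 + \<kappa> \<theta> * t) * pderiv2 (T \<theta>) (pderiv2 (T \<theta>) u) (\<gamma> \<theta> + t *\<^sub>R \<nu> \<theta>)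
      - \<kappa> \<theta> * pderiv2 (\<nu> \<theta>) u (\<gamma> \<theta> + t *\<^sub>R \<nu> \<theta>)"
proof -
  define \<Phi> where "\<Phi> \<psi> = \<gamma> \<psi> + t *\<^sub>R \<nu> \<psi>" for \<psi>
  have ud: "u differentiable (at y)" for y
    using u by (simp add: C2_R2_def C1_R2_def)
  have \<theta>: "\<theta> \<in> ball \<theta> \<eta>"
    using radius_pos by simp
  have d\<Phi>: "(\<Phi> has_vector_derivative (1 + \<kappa> \<phi> * t) *\<^sub>R T \<phi>) (at \<phi>)" if "\<phi> \<in> ball \<theta> \<eta>" for \<phi>
  proof -
    have "(\<Phi> has_vector_derivative T \<phi> + (t *\<^sub>R (\<kappa> \<phi> *\<^sub>R T \<phi>) + 0 *\<^sub>R \<nu> \<phi>)) (at \<phi>)"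
      unfolding \<Phi>_def[abs_def]
      by (intro has_vector_derivative_add has_vector_derivative_scaleR tangent normal_deriv DERIV_const that)
    then show ?thesis
      by (simp add: algebra_simps)
  qed
  have quotient: "deriv (\<lambda>\<psi>. fermi \<gamma> \<nu> u t \<psi>) \<phi> / (1 + \<kappa> \<phi> * t) = pderiv2 (T \<phi>) u (\<Phi> \<phi>)"
    if "\<phi> \<in> ball \<theta> \<eta>" for \<phi>
  proof -
    have "deriv (\<lambda>\<psi>. fermi \<gamma> \<nu> u t \<psi>) \<phi> = pderiv2 ((1 + \<kappa> \<phi> * t) *\<^sub>R T \<phi>) u (\<Phi> \<phi>)"
      unfolding fermi_def \<Phi>_def[symmetric] by (intro DERIV_imp_deriv pderiv2_chain_rule ud d\<Phi> that)
    then show ?thesis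
      using jac[OF that] by (simp add: pderiv2_scaleR[OF ud])
  qed
  have "((\<lambda>\<phi>. pderiv2 (T \<phi>) u (\<Phi> \<phi>)) has_real_derivative
      pderiv2 (- \<kappa> \<theta> *\<^sub>R \<nu> \<theta>) u (\<Phi> \<theta>) + pderiv2 ((1 + \<kappa> \<theta> * t) *\<^sub>R T \<theta>) (pderiv2 (T \<theta>) u) (\<Phi> \<theta>)) (at \<theta>)"
    by (rule pderiv2_moving_chain_rule[OF u tangent_deriv d\<Phi>[OF \<theta>]])
  also have "pderiv2 (- \<kappa> \<theta> *\<^sub>R \<nu> \<theta>) u (\<Phi> \<theta>) + pderiv2 ((1 + \<kappa> \<theta> * t) *\<^sub>R T \<theta>) (pderiv2 (T \<theta>) u) (\<Phi> \<theta>)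
      = (1 + \<kappa> \<theta> * t) * pderiv2 (T \<theta>) (pderiv2 (T \<theta>) u) (\<Phi> \<theta>) - \<kappa> \<theta> * pderiv2 (\<nu> \<theta>) u (\<Phi> \<theta>)"
    unfolding pderiv2_scaleR[OF ud] pderiv2_scaleR[OF C1_R2_differentiable[OF C2_R2_pderiv2[OF u]]]
    by simp
  finally have "((\<lambda>\<phi>. deriv (\<lambda>\<psi>. fermi \<gamma> \<nu> u t \<psi>) \<phi> / (1 + \<kappa> \<phi> * t)) has_real_derivative
      (1 + \<kappa> \<theta> * t) * pderiv2 (T \<theta>) (pderiv2 (T \<theta>) u) (\<Phi> \<theta>) - \<kappa> \<theta> * pderiv2 (\<nu> \<theta>) u (\<Phi> \<theta>)) (at \<theta>)"
    by (rule has_field_derivative_transform_within_open[OF _ open_ball \<theta>]) (simp add: quotient)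
  then show ?thesis
    unfolding \<Phi>_def by (rule DERIV_imp_deriv)
qed

lemma laplacian:
  assumes u: "C2_R2 u" and jac: "\<And>\<phi>. \<phi> \<in> ball \<theta> \<eta> \<Longrightarrow> 1 + \<kappa> \<phi> * t \<noteq> 0"
  shows "(1 + \<kappa> \<theta> * t) * laplacian2 u (\<gamma> \<theta> + t *\<^sub>R \<nu> \<theta>)
    = (1 + \<kappa> \<theta> * t) * deriv (deriv (\<lambda>s. fermi \<gamma> \<nu> u s \<theta>)) t + \<kappa> \<theta> * deriv (\<lambda>s. fermi \<gamma> \<nu> u s \<theta>) t
      + deriv (\<lambda>\<phi>. deriv (\<lambda>\<psi>. fermi \<gamma> \<nu> u t \<psi>) \<phi> / (1 + \<kappa> \<phi> * t)) \<theta>"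
proof -
  have ud: "u differentiable (at y)" for y
    using u by (simp add: C2_R2_def C1_R2_def)
  have normal: "deriv (\<lambda>s. fermi \<gamma> \<nu> u s \<theta>) = (\<lambda>s. pderiv2 (\<nu> \<theta>) u (\<gamma> \<theta> + s *\<^sub>R \<nu> \<theta>))"
    unfolding fermi_def by (rule deriv_along_line[OF ud])
  have normal2: "deriv (\<lambda>s. pderiv2 (\<nu> \<theta>) u (\<gamma> \<theta> + s *\<^sub>R \<nu> \<theta>))
      = (\<lambda>s. pderiv2 (\<nu> \<theta>) (pderiv2 (\<nu> \<theta>) u) (\<gamma> \<theta> + s *\<^sub>R \<nu> \<theta>))"
    by (rule deriv_along_line[OF C1_R2_differentiable[OF C2_R2_pderiv2[OF u]]])
  show ?thesis
    using tangential_derivative[OF u jac]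
    unfolding normal normal2 laplacian2_orthonormal_frame[OF u normal_unit tangent_unit normal_tangent]
    by (simp add: algebra_simps)
qed

lemma continuous_on_tangential_derivative:
  assumes u: "C2_R2 u" and jac: "\<And>\<phi> t. \<phi> \<in> ball \<theta> \<eta> \<Longrightarrow> t \<in> S \<Longrightarrow> 1 + \<kappa> \<phi> * t \<noteq> 0"
  shows "continuous_on S (\<lambda>t. deriv (\<lambda>\<phi>. deriv (\<lambda>\<psi>. fermi \<gamma> \<nu> u t \<psi>) \<phi> / (1 + \<kappa> \<phi> * t)) \<theta>)"
proof -
  have "continuous_on S (\<lambda>t. (1 + \<kappa> \<theta> * t) * pderiv2 (T \<theta>) (pderiv2 (T \<theta>) u) (\<gamma> \<theta> + t *\<^sub>R \<nu> \<theta>)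
      - \<kappa> \<theta> * pderiv2 (\<nu> \<theta>) u (\<gamma> \<theta> + t *\<^sub>R \<nu> \<theta>))"
    using u by (intro continuous_intros continuous_on_compose2[OF C1_R2_continuous_pderiv2] C2_R2_pderiv2)
      (auto simp: C2_R2_def)
  then show ?thesis
    by (rule continuous_on_eq) (rule tangential_derivative[OF u jac, symmetric])
qed

lemma pde_along_normal:
  assumes u: "C2_R2 u" and jac: "\<And>\<phi>. \<phi> \<in> ball \<theta> \<eta> \<Longrightarrow> 1 + \<kappa> \<phi> * t \<noteq> 0"
    and pde: "\<And>y. - e * laplacian2 u y + (1 + e * W y) * u y - \<bar>u y\<bar>\<^sup>2 * u y = 0"
  shows "e * ((1 + \<kappa> \<theta> * t) * deriv (deriv (\<lambda>s. fermi \<gamma> \<nu> u s \<theta>)) t + \<kappa> \<theta> * deriv (\<lambda>s. fermi \<gamma> \<nu> u s \<theta>) t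
      + deriv (\<lambda>\<phi>. deriv (\<lambda>\<psi>. fermi \<gamma> \<nu> u t \<psi>) \<phi> / (1 + \<kappa> \<phi> * t)) \<theta>)
    = (1 + \<kappa> \<theta> * t) * ((1 + e * fermi \<gamma> \<nu> W t \<theta>) * fermi \<gamma> \<nu> u t \<theta> - fermi \<gamma> \<nu> u t \<theta> ^ 3)"
  using laplacian[OF u jac] pde[of "\<gamma> \<theta> + t *\<^sub>R \<nu> \<theta>"] unfolding fermi_def power2_abs by algebra

end

section \<open>Energy and Pohozaev identities on an interval\<close>

lemma fundamental_theorem_of_calculus_evalb:
  fixes h h' :: "real \<Rightarrow> real"
  assumes "a \<le> b" and "\<And>t. t \<in> {a..b} \<Longrightarrow> (h has_real_derivative h' t) (at t)"
  shows "(h' has_integral evalb h a b) {a..b}"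
  unfolding evalb_def
  by (rule fundamental_theorem_of_calculus[OF assms(1)])
     (simp add: has_real_derivative_iff_has_vector_derivative[symmetric] assms(2) has_field_derivative_at_within)

lemma has_integral_integral_continuous:
  fixes f :: "real \<Rightarrow> real"
  shows "continuous_on {a..b} f \<Longrightarrow> (f has_integral integral {a..b} f) {a..b}"
  by (rule integrable_integral[OF integrable_continuous_interval])

context
  fixes U W D :: "real \<Rightarrow> real" and k e a b :: real
  assumes ab: "a \<le> b"
    and U: "\<And>t. t \<in> {a..b} \<Longrightarrow> (U has_real_derivative deriv U t) (at t)"
    and U': "\<And>t. t \<in> {a..b} \<Longrightarrow> (deriv U has_real_derivative deriv (deriv U) t) (at t)"
    and W: "\<And>t. t \<in> {a..b} \<Longrightarrow> (W has_real_derivative deriv W t) (at t)"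
    and W': "continuous_on {a..b} (deriv W)" and D: "continuous_on {a..b} D"
    and ode: "\<And>t. t \<in> {a..b} \<Longrightarrow>
      e * ((1 + k * t) * deriv (deriv U) t + k * deriv U t + D t) = (1 + k * t) * ((1 + e * W t) * U t - U t ^ 3)"
begin

lemma continuous_on_profiles:
  shows "continuous_on {a..b} U" and "continuous_on {a..b} (deriv U)" and "continuous_on {a..b} W"
proof -
  show "continuous_on {a..b} U"
    using U by (intro continuous_at_imp_continuous_on ballI DERIV_isCont) auto
  show "continuous_on {a..b} (deriv U)"
    using U' by (intro continuous_at_imp_continuous_on ballI DERIV_isCont) auto
  show "continuous_on {a..b} W"
    using W by (intro continuous_at_imp_continuous_on ballI DERIV_isCont) auto
qed

lemma energy_identity:
  "e * integral {a..b} (\<lambda>t. (1 + k * t) * (deriv U t)\<^sup>2)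
     + integral {a..b} (\<lambda>t. (1 + k * t) * (1 + e * W t) * (U t)\<^sup>2)
     - integral {a..b} (\<lambda>t. (1 + k * t) * (U t) ^ 4)
   = e * integral {a..b} (\<lambda>t. U t * D t) + e * evalb (\<lambda>t. (1 + k * t) * U t * deriv U t) a b"
proof -
  let ?f = "\<lambda>t. e * ((1 + k * t) * (deriv U t)\<^sup>2) + (1 + k * t) * (1 + e * W t) * (U t)\<^sup>2
    - (1 + k * t) * U t ^ 4 - e * (U t * D t)"
  have ftc: "((\<lambda>t. e * (k * U t * deriv U t + (1 + k * t) * deriv U t * deriv U t + (1 + k * t) * U t * deriv (deriv U) t))
      has_integral e * evalb (\<lambda>t. (1 + k * t) * U t * deriv U t) a b) {a..b}"
    using U U' by (intro has_integral_mult_right fundamental_theorem_of_calculus_evalb[OF ab])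
      (auto intro!: derivative_eq_intros simp: algebra_simps)
  have pointwise: "e * (k * U t * deriv U t + (1 + k * t) * deriv U t * deriv U t + (1 + k * t) * U t * deriv (deriv U) t)
      = ?f t" if "t \<in> {a..b}" for t
    using ode[OF that] by algebra
  have "(?f has_integral e * evalb (\<lambda>t. (1 + k * t) * U t * deriv U t) a b) {a..b}"
    by (rule has_integral_eq[OF pointwise ftc])
  moreover have "(?f has_integral e * integral {a..b} (\<lambda>t. (1 + k * t) * (deriv U t)\<^sup>2)
     + integral {a..b} (\<lambda>t. (1 + k * t) * (1 + e * W t) * (U t)\<^sup>2)
     - integral {a..b} (\<lambda>t. (1 + k * t) * (U t) ^ 4) - e * integral {a..b} (\<lambda>t. U t * D t)) {a..b}"
    by (intro has_integral_diff has_integral_add has_integral_mult_right has_integral_integral_continuous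
        continuous_intros continuous_on_profiles D)
  ultimately have "e * evalb (\<lambda>t. (1 + k * t) * U t * deriv U t) a b
    = e * integral {a..b} (\<lambda>t. (1 + k * t) * (deriv U t)\<^sup>2)
     + integral {a..b} (\<lambda>t. (1 + k * t) * (1 + e * W t) * (U t)\<^sup>2)
     - integral {a..b} (\<lambda>t. (1 + k * t) * (U t) ^ 4) - e * integral {a..b} (\<lambda>t. U t * D t)"
    by (rule has_integral_unique)
  then show ?thesis
    by linarith
qed

lemma pohozaev_identity:
  "e * integral {a..b} (\<lambda>t. (1 + k * t)\<^sup>2 * deriv W t * (U t)\<^sup>2)
     + 2 * k * integral {a..b} (\<lambda>t. (1 + k * t) * (1 + e * W t) * (U t)\<^sup>2)
     - k * integral {a..b} (\<lambda>t. (1 + k * t) * (U t) ^ 4)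
   = - 2 * e * integral {a..b} (\<lambda>t. (1 + k * t) * deriv U t * D t)
     - e * evalb (\<lambda>t. ((1 + k * t) * deriv U t)\<^sup>2) a b
     + evalb (\<lambda>t. (1 + k * t)\<^sup>2 * (1 + e * W t) * (U t)\<^sup>2) a b
     - 1/2 * evalb (\<lambda>t. (1 + k * t)\<^sup>2 * \<bar>U t\<bar> ^ 4) a b"
proof -
  let ?h = "\<lambda>t. (1 + k * t)\<^sup>2 * (1 + e * W t) * (U t)\<^sup>2 - e * ((1 + k * t) * deriv U t)\<^sup>2
    - 1/2 * ((1 + k * t)\<^sup>2 * U t ^ 4)"
  let ?dh = "\<lambda>t. 2 * k * (1 + k * t) * (1 + e * W t) * (U t)\<^sup>2 + (1 + k * t)\<^sup>2 * (e * deriv W t) * (U t)\<^sup>2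
    + 2 * (1 + k * t)\<^sup>2 * (1 + e * W t) * U t * deriv U t
    - 2 * e * ((1 + k * t) * deriv U t) * (k * deriv U t + (1 + k * t) * deriv (deriv U) t)
    - 1/2 * (2 * k * (1 + k * t) * U t ^ 4 + 4 * (1 + k * t)\<^sup>2 * U t ^ 3 * deriv U t)"
  let ?f = "\<lambda>t. 2 * e * ((1 + k * t) * deriv U t * D t) + 2 * k * ((1 + k * t) * (1 + e * W t) * (U t)\<^sup>2)
    + e * ((1 + k * t)\<^sup>2 * deriv W t * (U t)\<^sup>2) - k * ((1 + k * t) * U t ^ 4)"
  have ftc: "(?dh has_integral evalb ?h a b) {a..b}"
    using U U' W by (intro fundamental_theorem_of_calculus_evalb[OF ab])
      (auto intro!: derivative_eq_intros simp: algebra_simps power2_eq_square)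
  have pointwise: "?dh t = ?f t" if "t \<in> {a..b}" for t
    using ode[OF that] by algebra
  have "(?f has_integral evalb ?h a b) {a..b}"
    by (rule has_integral_eq[OF pointwise ftc])
  moreover have "(?f has_integral 2 * e * integral {a..b} (\<lambda>t. (1 + k * t) * deriv U t * D t)
     + 2 * k * integral {a..b} (\<lambda>t. (1 + k * t) * (1 + e * W t) * (U t)\<^sup>2)
     + e * integral {a..b} (\<lambda>t. (1 + k * t)\<^sup>2 * deriv W t * (U t)\<^sup>2)
     - k * integral {a..b} (\<lambda>t. (1 + k * t) * (U t) ^ 4)) {a..b}"
    by (intro has_integral_diff has_integral_add has_integral_mult_right has_integral_integral_continuous
        continuous_intros continuous_on_profiles W' D)
  ultimately have "evalb ?h a b = 2 * e * integral {a..b} (\<lambda>t. (1 + k * t) * deriv U t * D t)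
     + 2 * k * integral {a..b} (\<lambda>t. (1 + k * t) * (1 + e * W t) * (U t)\<^sup>2)
     + e * integral {a..b} (\<lambda>t. (1 + k * t)\<^sup>2 * deriv W t * (U t)\<^sup>2)
     - k * integral {a..b} (\<lambda>t. (1 + k * t) * (U t) ^ 4)"
    by (rule has_integral_unique)
  moreover have "evalb ?h a b = evalb (\<lambda>t. (1 + k * t)\<^sup>2 * (1 + e * W t) * (U t)\<^sup>2) a b
     - e * evalb (\<lambda>t. ((1 + k * t) * deriv U t)\<^sup>2) a b - 1/2 * evalb (\<lambda>t. (1 + k * t)\<^sup>2 * \<bar>U t\<bar> ^ 4) a b"
    by (simp add: evalb_def power_even_abs_numeral algebra_simps)
  ultimately show ?thesis
    by linarith
qed

lemma weighted_energy_identities: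
  "e * integral {a..b} (\<lambda>t. (1 + k * t) * (deriv U t)\<^sup>2)
       + integral {a..b} (\<lambda>t. (1 + k * t) * (1 + e * W t) * (U t)\<^sup>2)
       - integral {a..b} (\<lambda>t. (1 + k * t) * (U t) ^ 4)
     = e * integral {a..b} (\<lambda>t. U t * D t)
       + e * evalb (\<lambda>t. (1 + k * t) * U t * deriv U t) a b
   \<and>
     e * integral {a..b} (\<lambda>t. (1 + k * t)\<^sup>2 * deriv W t * (U t)\<^sup>2)
       + 2 * k * integral {a..b} (\<lambda>t. (1 + k * t) * (1 + e * W t) * (U t)\<^sup>2)
       - k * integral {a..b} (\<lambda>t. (1 + k * t) * (U t) ^ 4)
     = - 2 * e * integral {a..b} (\<lambda>t. (1 + k * t) * deriv U t * D t)
       - e * evalb (\<lambda>t. ((1 + k * t) * deriv U t)\<^sup>2) a b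
       + evalb (\<lambda>t. (1 + k * t)\<^sup>2 * (1 + e * W t) * (U t)\<^sup>2) a b
       - 1/2 * evalb (\<lambda>t. (1 + k * t)\<^sup>2 * \<bar>U t\<bar> ^ 4) a b
   \<and>
     2 * e * k * integral {a..b} (\<lambda>t. (1 + k * t) * (deriv U t)\<^sup>2)
       - e * integral {a..b} (\<lambda>t. (1 + k * t)\<^sup>2 * deriv W t * (U t)\<^sup>2)
       - k * integral {a..b} (\<lambda>t. (1 + k * t) * (U t) ^ 4)
     = 2 * e * integral {a..b} (\<lambda>t. deriv (\<lambda>s. (1 + k * s) * U s) t * D t)
       + 2 * e * k * evalb (\<lambda>t. (1 + k * t) * U t * deriv U t) a b
       + e * evalb (\<lambda>t. ((1 + k * t) * deriv U t)\<^sup>2) a b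
       - evalb (\<lambda>t. (1 + k * t)\<^sup>2 * (1 + e * W t) * (U t)\<^sup>2) a b
       + 1/2 * evalb (\<lambda>t. (1 + k * t)\<^sup>2 * \<bar>U t\<bar> ^ 4) a b"
proof -
  have "integral {a..b} (\<lambda>t. deriv (\<lambda>s. (1 + k * s) * U s) t * D t)
      = integral {a..b} (\<lambda>t. k * (U t * D t) + (1 + k * t) * deriv U t * D t)"
  proof (rule integral_cong)
    fix t assume "t \<in> {a..b}"
    then have "deriv (\<lambda>s. (1 + k * s) * U s) t = k * U t + (1 + k * t) * deriv U t"
      using U by (intro DERIV_imp_deriv) (auto intro!: derivative_eq_intros)
    then show "deriv (\<lambda>s. (1 + k * s) * U s) t * D t = k * (U t * D t) + (1 + k * t) * deriv U t * D t"
      by (simp add: algebra_simps)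
  qed
  also have "\<dots> = k * integral {a..b} (\<lambda>t. U t * D t) + integral {a..b} (\<lambda>t. (1 + k * t) * deriv U t * D t)"
    by (intro integral_unique has_integral_add has_integral_mult_right has_integral_integral_continuous
        continuous_intros continuous_on_profiles D)
  finally show ?thesis
    using energy_identity pohozaev_identity by algebra
qed

end

section \<open>Periodic curves and their Fermi tubes\<close>

lemma inj_on_fermi_flip:
  fixes \<gamma> \<nu> n :: "real \<Rightarrow> 'a::real_vector"
  assumes flip: "\<And>\<phi>. n \<phi> = \<nu> \<phi> \<or> n \<phi> = - \<nu> \<phi>"
    and inj: "inj_on (\<lambda>(t, \<phi>). \<gamma> \<phi> + t *\<^sub>R \<nu> \<phi>) ({-M<..<M} \<times> A)"
  shows "inj_on (\<lambda>(t, \<phi>). \<gamma> \<phi> + t *\<^sub>R n \<phi>) ({-M<..<M} \<times> A)"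
proof -
  define s where "s \<phi> = (if n \<phi> = \<nu> \<phi> then 1 else - 1 :: real)" for \<phi>
  have n: "n \<phi> = s \<phi> *\<^sub>R \<nu> \<phi>" and s: "s \<phi> = 1 \<or> s \<phi> = - 1" for \<phi>
    using flip[of \<phi>] by (auto simp: s_def)
  have mem: "t * s \<phi> \<in> {-M<..<M}" if "t \<in> {-M<..<M}" for t \<phi>
    using that s[of \<phi>] by auto
  define g where "g = (\<lambda>(t, \<phi>). (t * s \<phi>, \<phi>))"
  have "inj_on g ({-M<..<M} \<times> A)"
    using s by (auto simp: inj_on_def g_def) (metis zero_neq_neg_one zero_neq_one)
  moreover have "g ` ({-M<..<M} \<times> A) \<subseteq> {-M<..<M} \<times> A"
    using mem by (auto simp: g_def)
  ultimately have "inj_on ((\<lambda>(t, \<phi>). \<gamma> \<phi> + t *\<^sub>R \<nu> \<phi>) \<circ> g) ({-M<..<M} \<times> A)"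
    using comp_inj_on inj_on_subset[OF inj] by blast
  moreover have "(\<lambda>(t, \<phi>). \<gamma> \<phi> + t *\<^sub>R \<nu> \<phi>) \<circ> g = (\<lambda>(t, \<phi>). \<gamma> \<phi> + t *\<^sub>R n \<phi>)"
    by (auto simp: g_def n)
  ultimately show ?thesis
    by simp
qed

lemma periodic_representative:
  fixes L x :: real
  assumes "L > 0"
  obtains y and k :: int where "y \<in> {0..<L}" and "x = y + of_int k * L"
proof -
  have "x - of_int \<lfloor>x / L\<rfloor> * L \<in> {0..<L}"
    using floor_divide_lower[OF assms, of x] floor_divide_upper[OF assms, of x] by (auto simp: algebra_simps)
  then show ?thesis
    by (rule that[of _ "\<lfloor>x / L\<rfloor>"]) simp
qed

lemma periodic_image:
  fixes f :: "real \<Rightarrow> 'a"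
  assumes "L > 0" and "\<And>x. f (x + L) = f x"
  shows "f x \<in> f ` {0..<L}"
proof -
  interpret periodic_fun_simple f L by standard (rule assms(2))
  obtain y k where "y \<in> {0..<L}" "x = y + of_int k * L"
    using periodic_representative[OF assms(1)] .
  then show ?thesis
    using plus_of_int[of y k] by auto
qed

lemma periodic_fermi_eq:
  fixes \<gamma> n :: "real \<Rightarrow> 'a::real_vector"
  assumes "L > 0" and \<gamma>: "\<And>\<phi>. \<gamma> (\<phi> + L) = \<gamma> \<phi>" and n: "\<And>\<phi>. n (\<phi> + L) = n \<phi>"
    and inj: "inj_on (\<lambda>(t, \<phi>). \<gamma> \<phi> + t *\<^sub>R n \<phi>) ({-M<..<M} \<times> {0..<L})"
    and "\<bar>t\<bar> < M" "\<bar>t'\<bar> < M" and eq: "\<gamma> \<phi> + t *\<^sub>R n \<phi> = \<gamma> \<phi>' + t' *\<^sub>R n \<phi>'"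
  shows "t = t' \<and> (\<exists>k::int. \<phi>' = \<phi> + of_int k * L)"
proof -
  interpret \<gamma>: periodic_fun_simple \<gamma> L by standard (rule \<gamma>)
  interpret n: periodic_fun_simple n L by standard (rule n)
  obtain y k where y: "y \<in> {0..<L}" "\<phi> = y + of_int k * L"
    using periodic_representative[OF \<open>L > 0\<close>] .
  obtain y' k' where y': "y' \<in> {0..<L}" "\<phi>' = y' + of_int k' * L"
    using periodic_representative[OF \<open>L > 0\<close>] .
  have "(t, y) = (t', y')"
    using \<open>\<bar>t\<bar> < M\<close> \<open>\<bar>t'\<bar> < M\<close> y y' eq
    by (intro inj_onD[OF inj]) (auto simp: \<gamma>.plus_of_int n.plus_of_int)
  then show ?thesis
    using y y' by (auto simp: algebra_simps intro!: exI[of _ "k' - k"])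
qed

lemma periodic_has_vector_derivative:
  assumes "\<And>x. f (x + L) = f x" and "\<And>x. (f has_vector_derivative f' x) (at x)"
  shows "f' (x + L) = f' x"
proof -
  have "((\<lambda>y. y + L) has_vector_derivative 1) (at x)"
    by (auto intro!: derivative_eq_intros)
  from vector_diff_chain_at[OF this assms(2)[of "x + L"]]
  have "(f has_vector_derivative f' (x + L)) (at x)"
    by (simp add: comp_def assms(1))
  then show ?thesis
    using vector_derivative_unique_at[OF _ assms(2)[of x]] by simp
qed

lemma periodic_curve_image_homeomorphic_circle:
  fixes \<gamma> :: "real \<Rightarrow> 'a::t2_space"
  assumes "L > 0" and "continuous_on {0..L} \<gamma>" and "\<gamma> L = \<gamma> 0" and "inj_on \<gamma> {0..<L}"
  shows "\<gamma> ` {0..L} homeomorphic sphere (0::complex) 1"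
proof -
  define c where "c x = \<gamma> (L * x)" for x
  have image: "path_image c = \<gamma> ` {0..L}"
    using image_mult_atLeastAtMost[OF \<open>L > 0\<close>, of 0 1]
    unfolding path_image_def c_def by (simp add: image_image[of \<gamma> "(*) L", symmetric])
  have "path c"
    unfolding path_def c_def
    using \<open>L > 0\<close> by (intro continuous_on_compose2[OF assms(2)] continuous_intros) (auto simp: mult_le_cancel_left1)
  moreover have "loop_free c"
    unfolding loop_free_def
  proof (intro ballI impI)
    fix x y :: real assume xy: "x \<in> {0..1}" "y \<in> {0..1}" and "c x = c y"
    define r where "r z = (if z = 1 then 0 else z)" for z :: real
    have "c z = \<gamma> (L * r z)" for z
      using assms(3) by (simp add: c_def r_def)
    with \<open>c x = c y\<close> have "\<gamma> (L * r x) = \<gamma> (L * r y)"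
      by simp
    moreover have "L * r z \<in> {0..<L}" if "z \<in> {0..1}" for z
      using that \<open>L > 0\<close> by (auto simp: r_def)
    ultimately have "L * r x = L * r y"
      using inj_onD[OF assms(4)] xy by blast
    then show "x = y \<or> x = 0 \<and> y = 1 \<or> x = 1 \<and> y = 0"
      using \<open>L > 0\<close> xy by (auto simp: r_def split: if_splits)
  qed
  ultimately have "simple_path c"
    by (simp add: simple_path_def)
  moreover have "pathfinish c = pathstart c"
    using assms(3) by (simp add: pathfinish_def pathstart_def c_def)
  ultimately show ?thesis
    using homeomorphic_simple_path_image_circle[of c 1 0] image by simp
qed

lemma sphere_homeomorphic_subset_closure_inside:
  fixes C :: "'a::euclidean_space set" and a :: 'a
  assumes hom: "C homeomorphic sphere a r" and "0 < r" and dim: "2 \<le> DIM('a)"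
  shows "C \<subseteq> closure (inside C)"
proof -
  have "bounded C"
    using hom compact_sphere homeomorphic_compactness compact_imp_bounded by blast
  then have "connected (outside C)"
    using connected_outside dim by blast
  moreover have "\<not> connected (- C)"
    using Jordan_Brouwer_separation[OF hom \<open>0 < r\<close>] .
  ultimately have "outside C \<noteq> - C"
    by auto
  moreover have "outside C \<subseteq> - C"
    using outside_no_overlap[of C] by blast
  ultimately obtain x where x: "x \<in> - C" "x \<notin> outside C"
    by blast
  define T where "T = connected_component_set (- C) x"
  have "T \<in> components (- C)"
    unfolding T_def components_def using x(1) by blast
  then have "frontier T = C"
    by (rule Jordan_Brouwer_frontier[OF hom _ dim])
  have "x \<in> inside C"
    using x by (simp add: inside_outside)
  then have "T \<subseteq> inside C"
    unfolding T_def by (auto intro: inside_same_component)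
  with \<open>frontier T = C\<close> show ?thesis
    unfolding frontier_def using closure_mono by blast
qed

lemma simple_closed_curve_subset_closure_inside:
  fixes \<gamma> :: "real \<Rightarrow> real^2"
  assumes "L > 0" and "continuous_on {0..L} \<gamma>" and "\<gamma> L = \<gamma> 0" and "inj_on \<gamma> {0..<L}"
  shows "\<gamma> ` {0..L} \<subseteq> closure (inside (\<gamma> ` {0..L}))"
proof -
  have "\<gamma> ` {0..L} homeomorphic sphere (0::complex) 1"
    by (rule periodic_curve_image_homeomorphic_circle[OF assms])
  then have "\<gamma> ` {0..L} homeomorphic sphere (0::real^2) 1"
    by (rule homeomorphic_trans[OF _ homeomorphic_spheres_gen]) simp_all
  then show ?thesis
    by (rule sphere_homeomorphic_subset_closure_inside) simp_all
qed

definition fermi_chart :: "(real \<Rightarrow> real^2) \<Rightarrow> (real \<Rightarrow> real^2) \<Rightarrow> real^2 \<Rightarrow> real^2" where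
  "fermi_chart \<gamma> n y = \<gamma> (y$2) + y$1 *\<^sub>R n (y$2)"

lemma continuous_on_fermi_chart:
  assumes "continuous_on UNIV \<gamma>" and "continuous_on UNIV n"
  shows "continuous_on S (fermi_chart \<gamma> n)"
  unfolding fermi_chart_def
  by (intro continuous_intros continuous_on_compose2[OF assms(1)] continuous_on_compose2[OF assms(2)]) auto

lemma mem_box_centered_2:
  "(y::real^2) \<in> box (vector [- a, c - b]) (vector [a, c + b]) \<longleftrightarrow> \<bar>y$1\<bar> < a \<and> \<bar>y$2 - c\<bar> < b"
  unfolding mem_box_cart forall_2 abs_less_iff by (auto simp: field_simps)

context
  fixes \<gamma> n :: "real \<Rightarrow> real^2" and L M :: real
  assumes L: "L > 0" and \<gamma>_per: "\<And>\<phi>. \<gamma> (\<phi> + L) = \<gamma> \<phi>" and n_per: "\<And>\<phi>. n (\<phi> + L) = n \<phi>"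
    and inj: "inj_on (\<lambda>(t, \<phi>). \<gamma> \<phi> + t *\<^sub>R n \<phi>) ({-M<..<M} \<times> {0..<L})"
begin

lemma fermi_chart_eqD:
  assumes "fermi_chart \<gamma> n y = fermi_chart \<gamma> n y'" and "\<bar>y$1\<bar> < M" "\<bar>y'$1\<bar> < M"
  shows "y$1 = y'$1 \<and> (\<exists>k::int. y'$2 = y$2 + of_int k * L)"
  using periodic_fermi_eq[OF L \<gamma>_per n_per inj assms(2,3)] assms(1) by (simp add: fermi_chart_def)

lemma fermi_chart_in_curve_iff:
  assumes "\<bar>y$1\<bar> < M"
  shows "fermi_chart \<gamma> n y \<in> \<gamma> ` {0..L} \<longleftrightarrow> y$1 = 0"
proof
  assume "fermi_chart \<gamma> n y \<in> \<gamma> ` {0..L}"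
  then obtain \<psi> where "fermi_chart \<gamma> n y = fermi_chart \<gamma> n (vector [0, \<psi>])"
    by (auto simp: fermi_chart_def)
  then show "y$1 = 0"
    using fermi_chart_eqD[of y "vector [0, \<psi>]"] assms by simp
next
  assume "y$1 = 0"
  then show "fermi_chart \<gamma> n y \<in> \<gamma> ` {0..L}"
    using periodic_image[where f = \<gamma>, OF L \<gamma>_per, of "y$2"] by (force simp: fermi_chart_def)
qed

lemma inj_on_fermi_chart:
  "inj_on (fermi_chart \<gamma> n) (box (vector [- M, \<theta> - L/2]) (vector [M, \<theta> + L/2]))"
proof (rule inj_onI)
  fix y y' assume y: "y \<in> box (vector [- M, \<theta> - L/2]) (vector [M, \<theta> + L/2])"
    "y' \<in> box (vector [- M, \<theta> - L/2]) (vector [M, \<theta> + L/2])" "fermi_chart \<gamma> n y = fermi_chart \<gamma> n y'"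
  then obtain k :: int where k: "y$1 = y'$1" "y'$2 = y$2 + of_int k * L"
    using fermi_chart_eqD[of y y'] by (auto simp: mem_box_centered_2)
  have "\<bar>y'$2 - y$2\<bar> < L"
    using y(1,2) unfolding mem_box_centered_2 by linarith
  then have "\<bar>of_int k\<bar> * L < 1 * L"
    using k(2) L by (simp add: abs_mult)
  then have "k = 0"
    using L mult_right_less_imp_less[of "\<bar>of_int k\<bar>" L 1] by simp
  then show "y = y'"
    using k by (simp add: vec_eq_iff forall_2)
qed

lemma fermi_chart_meets_inside:
  assumes M: "M > 0" and \<theta>: "\<theta> \<in> {0..L}"
    and c\<gamma>: "continuous_on UNIV \<gamma>" and cn: "continuous_on UNIV n" and simple: "inj_on \<gamma> {0..<L}"
  obtains y where "\<bar>y$1\<bar> < M" "\<bar>y$2 - \<theta>\<bar> < L/2" "y$1 \<noteq> 0" "fermi_chart \<gamma> n y \<in> inside (\<gamma> ` {0..L})"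
proof -
  define C where "C = \<gamma> ` {0..L}"
  define B :: "(real^2) set" where "B = box (vector [- M, \<theta> - L/2]) (vector [M, \<theta> + L/2])"
  have "open (fermi_chart \<gamma> n ` B)"
    unfolding B_def
    by (intro invariance_of_domain inj_on_fermi_chart continuous_on_fermi_chart c\<gamma> cn open_box)
  moreover have "\<gamma> \<theta> \<in> fermi_chart \<gamma> n ` B"
    using M L by (auto simp: B_def mem_box_centered_2 fermi_chart_def intro!: image_eqI[of _ _ "vector [0, \<theta>]"])
  moreover have "\<gamma> \<theta> \<in> closure (inside C)"
    using simple_closed_curve_subset_closure_inside[OF L continuous_on_subset[OF c\<gamma>] _ simple] \<theta> \<gamma>_per[of 0]
    by (auto simp: C_def)
  ultimately obtain y where y: "y \<in> B" "fermi_chart \<gamma> n y \<in> inside C"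
    using open_Int_closure_eq_empty[of "fermi_chart \<gamma> n ` B" "inside C"] by blast
  then have box: "\<bar>y$1\<bar> < M" "\<bar>y$2 - \<theta>\<bar> < L/2"
    unfolding B_def mem_box_centered_2 by auto
  moreover have "y$1 \<noteq> 0"
  proof
    assume "y$1 = 0"
    then have "fermi_chart \<gamma> n y \<in> C"
      using fermi_chart_in_curve_iff[OF box(1)] by (simp add: C_def)
    with y(2) show False
      using inside_no_overlap[of C] by blast
  qed
  ultimately show ?thesis
    using that y(2) unfolding C_def by blast
qed

lemma fermi_one_side_inside:
  assumes M: "M > 0" and \<theta>: "\<theta> \<in> {0..L}"
    and c\<gamma>: "continuous_on UNIV \<gamma>" and cn: "continuous_on UNIV n" and simple: "inj_on \<gamma> {0..<L}"
  obtains \<sigma> where "\<sigma> = 1 \<or> \<sigma> = -1"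
    and "\<And>s \<phi>. 0 < s \<Longrightarrow> s < M \<Longrightarrow> \<bar>\<phi> - \<theta>\<bar> < L/2 \<Longrightarrow> \<gamma> \<phi> + (\<sigma> * s) *\<^sub>R n \<phi> \<in> inside (\<gamma> ` {0..L})"
proof -
  define C where "C = \<gamma> ` {0..L}"
  define F where "F = fermi_chart \<gamma> n"
  obtain y0 where y0: "\<bar>y0$1\<bar> < M" "\<bar>y0$2 - \<theta>\<bar> < L/2" "y0$1 \<noteq> 0" "F y0 \<in> inside C"
    using fermi_chart_meets_inside[OF M \<theta> c\<gamma> cn simple] unfolding F_def C_def .
  define \<sigma> where "\<sigma> = sgn (y0$1)"
  have \<sigma>: "\<sigma> = 1 \<or> \<sigma> = -1"
    using y0(3) by (auto simp: \<sigma>_def sgn_if)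
  define B' :: "(real^2) set"
    where "B' = box (vector [- M, \<theta> - L/2]) (vector [M, \<theta> + L/2]) \<inter> {y. 0 < (\<sigma> *\<^sub>R axis 1 1) \<bullet> y}"
  have B': "y \<in> B' \<longleftrightarrow> \<bar>y$1\<bar> < M \<and> \<bar>y$2 - \<theta>\<bar> < L/2 \<and> 0 < \<sigma> * y$1" for y
    by (simp add: B'_def mem_box_centered_2 inner_axis')
  have "connected (F ` B')"
    unfolding B'_def F_def
    by (intro connected_continuous_image continuous_on_fermi_chart c\<gamma> cn convex_connected convex_Int
        convex_box convex_halfspace_gt)
  moreover have "F ` B' \<subseteq> - C"
  proof
    fix z assume "z \<in> F ` B'"
    then obtain y where "y \<in> B'" and z: "z = F y"
      by blast
    then have "\<bar>y$1\<bar> < M" and "y$1 \<noteq> 0"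
      by (auto simp: B')
    then show "z \<in> - C"
      using fermi_chart_in_curve_iff[of y] by (simp add: z F_def C_def)
  qed
  moreover have "y0 \<in> B'"
    using y0 by (simp add: B' \<sigma>_def sgn_if)
  ultimately have inside: "F ` B' \<subseteq> inside C"
    using y0(4) inside_same_component[of C "F y0"] unfolding connected_component_def by blast
  show ?thesis
  proof (rule that[OF \<sigma>])
    fix s \<phi> assume "0 < s" "s < M" "\<bar>\<phi> - \<theta>\<bar> < L/2"
    then have "vector [\<sigma> * s, \<phi>] \<in> B'"
      using \<sigma> by (auto simp: B')
    then show "\<gamma> \<phi> + (\<sigma> * s) *\<^sub>R n \<phi> \<in> inside (\<gamma> ` {0..L})"
      using inside by (auto simp: F_def fermi_chart_def C_def)
  qed
qed

end

section \<open>Regularity of the outer normal\<close>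

lemma outer_normal_locally_rot_tangent:
  fixes \<gamma> T \<nu> :: "real \<Rightarrow> real^2"
  assumes L: "L > 0" and M: "M > 0" and \<theta>: "\<theta> \<in> {0..L}"
    and c\<gamma>: "continuous_on UNIV \<gamma>" and cT: "continuous_on UNIV T"
    and \<gamma>_per: "\<And>\<phi>. \<gamma> (\<phi> + L) = \<gamma> \<phi>" and T_per: "\<And>\<phi>. T (\<phi> + L) = T \<phi>"
    and simple: "inj_on \<gamma> {0..<L}"
    and T_unit: "\<And>\<phi>. norm (T \<phi>) = 1" and \<nu>_unit: "\<And>\<phi>. norm (\<nu> \<phi>) = 1" and \<nu>_T: "\<And>\<phi>. \<nu> \<phi> \<bullet> T \<phi> = 0"
    and outer: "\<And>\<phi>. \<exists>\<delta>>0. \<forall>s. 0 < s \<and> s < \<delta> \<longrightarrow> \<gamma> \<phi> + s *\<^sub>R \<nu> \<phi> \<in> outside (\<gamma> ` {0..L})"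
    and inj: "inj_on (\<lambda>(t, \<phi>). \<gamma> \<phi> + t *\<^sub>R \<nu> \<phi>) ({-M<..<M} \<times> {0..<L})"
  obtains c where "c = 1 \<or> c = -1" and "\<And>\<phi>. \<bar>\<phi> - \<theta>\<bar> < L/2 \<Longrightarrow> \<nu> \<phi> = c *\<^sub>R rot (T \<phi>)"
proof -
  define n where "n \<phi> = rot (T \<phi>)" for \<phi>
  have flip: "n \<phi> = \<nu> \<phi> \<or> n \<phi> = - \<nu> \<phi>" for \<phi>
    using unit_orthogonal_eq_rot[OF \<nu>_unit T_unit \<nu>_T, of \<phi>] by (auto simp: n_def)
  have cn: "continuous_on UNIV n"
    unfolding n_def by (rule continuous_on_compose2[OF linear_continuous_on[OF bounded_linear_rot] cT]) auto
  have n_per: "n (\<phi> + L) = n \<phi>" for \<phi>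
    by (simp add: n_def T_per)
  obtain \<sigma> where \<sigma>: "\<sigma> = 1 \<or> \<sigma> = -1"
    and side: "\<And>s \<phi>. 0 < s \<Longrightarrow> s < M \<Longrightarrow> \<bar>\<phi> - \<theta>\<bar> < L/2 \<Longrightarrow> \<gamma> \<phi> + (\<sigma> * s) *\<^sub>R n \<phi> \<in> inside (\<gamma> ` {0..L})"
    using fermi_one_side_inside[OF L \<gamma>_per n_per inj_on_fermi_flip[OF flip inj] M \<theta> c\<gamma> cn simple] by blast
  show ?thesis
  proof (rule that[of "- \<sigma>"])
    show "- \<sigma> = 1 \<or> - \<sigma> = -1"
      using \<sigma> by auto
    fix \<phi> assume \<phi>: "\<bar>\<phi> - \<theta>\<bar> < L/2"
    show "\<nu> \<phi> = - \<sigma> *\<^sub>R rot (T \<phi>)"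
    proof (rule ccontr)
      assume "\<nu> \<phi> \<noteq> - \<sigma> *\<^sub>R rot (T \<phi>)"
      then have \<nu>: "\<nu> \<phi> = \<sigma> *\<^sub>R n \<phi>"
        using flip[of \<phi>] \<sigma> by (auto simp: n_def)
      obtain \<delta> where "\<delta> > 0" and out: "\<And>s. 0 < s \<Longrightarrow> s < \<delta> \<Longrightarrow> \<gamma> \<phi> + s *\<^sub>R \<nu> \<phi> \<in> outside (\<gamma> ` {0..L})"
        using outer[of \<phi>] by blast
      define s where "s = min \<delta> M / 2"
      have s: "0 < s" "s < \<delta>" "s < M"
        using \<open>\<delta> > 0\<close> M by (auto simp: s_def)
      have "\<gamma> \<phi> + s *\<^sub>R \<nu> \<phi> \<in> inside (\<gamma> ` {0..L})"
        using side[OF s(1,3) \<phi>] by (simp add: \<nu> mult.commute)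
      moreover have "\<gamma> \<phi> + s *\<^sub>R \<nu> \<phi> \<in> outside (\<gamma> ` {0..L})"
        using out[OF s(1,2)] .
      ultimately show False
        using inside_Int_outside by blast
    qed
  qed
qed

lemma outer_normal_has_vector_derivative:
  fixes \<gamma> T \<nu> :: "real \<Rightarrow> real^2" and \<kappa> :: "real \<Rightarrow> real"
  assumes L: "L > 0" and M: "M > 0" and \<theta>: "\<theta> \<in> {0..L}"
    and \<gamma>': "\<And>\<phi>. (\<gamma> has_vector_derivative T \<phi>) (at \<phi>)"
    and T': "\<And>\<phi>. (T has_vector_derivative - \<kappa> \<phi> *\<^sub>R \<nu> \<phi>) (at \<phi>)"
    and \<gamma>_per: "\<And>\<phi>. \<gamma> (\<phi> + L) = \<gamma> \<phi>" and simple: "inj_on \<gamma> {0..<L}"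
    and T_unit: "\<And>\<phi>. norm (T \<phi>) = 1" and \<nu>_unit: "\<And>\<phi>. norm (\<nu> \<phi>) = 1" and \<nu>_T: "\<And>\<phi>. \<nu> \<phi> \<bullet> T \<phi> = 0"
    and outer: "\<And>\<phi>. \<exists>\<delta>>0. \<forall>s. 0 < s \<and> s < \<delta> \<longrightarrow> \<gamma> \<phi> + s *\<^sub>R \<nu> \<phi> \<in> outside (\<gamma> ` {0..L})"
    and inj: "inj_on (\<lambda>(t, \<phi>). \<gamma> \<phi> + t *\<^sub>R \<nu> \<phi>) ({-M<..<M} \<times> {0..<L})"
    and \<phi>: "\<phi> \<in> ball \<theta> (L/2)"
  shows "(\<nu> has_vector_derivative \<kappa> \<phi> *\<^sub>R T \<phi>) (at \<phi>)"
proof -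
  have cont: "continuous_on UNIV f" if "\<And>x. (f has_vector_derivative f' x) (at x)" for f f' :: "real \<Rightarrow> real^2"
    using that by (intro continuous_at_imp_continuous_on ballI has_derivative_continuous)
      (auto simp: has_vector_derivative_def)
  obtain c where c: "c = 1 \<or> c = -1" and \<nu>: "\<And>x. \<bar>x - \<theta>\<bar> < L/2 \<Longrightarrow> \<nu> x = c *\<^sub>R rot (T x)"
    using outer_normal_locally_rot_tangent[OF L M \<theta> cont[OF \<gamma>'] cont[OF T'] \<gamma>_per
        periodic_has_vector_derivative[OF \<gamma>_per \<gamma>'] simple T_unit \<nu>_unit \<nu>_T outer inj] by blast
  have "((\<lambda>x. c *\<^sub>R rot (T x)) has_vector_derivative c *\<^sub>R rot (- \<kappa> \<phi> *\<^sub>R \<nu> \<phi>)) (at \<phi>)"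
    by (intro bounded_linear.has_vector_derivative[OF bounded_linear_scaleR_right]
        bounded_linear.has_vector_derivative[OF bounded_linear_rot] T')
  also have "c *\<^sub>R rot (- \<kappa> \<phi> *\<^sub>R \<nu> \<phi>) = \<kappa> \<phi> *\<^sub>R T \<phi>"
    using \<nu>[of \<phi>] \<phi> c by (auto simp: dist_real_def abs_minus_commute rot_scaleR rot_rot rot_uminus)
  finally show ?thesis
    by (rule has_vector_derivative_transform_within_open[OF _ open_ball \<phi>])
      (simp add: \<nu> dist_real_def abs_minus_commute)
qed

lemma smooth_curve_tangent:
  fixes \<gamma> \<nu> :: "real \<Rightarrow> real^2" and \<kappa> :: "real \<Rightarrow> real"
  assumes "smooth_curve \<gamma>"
    and "\<And>\<theta>. vector_derivative (\<lambda>s. vector_derivative \<gamma> (at s)) (at \<theta>) = - \<kappa> \<theta> *\<^sub>R \<nu> \<theta>"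
  obtains T where "\<And>\<phi>. (\<gamma> has_vector_derivative T \<phi>) (at \<phi>)"
    and "\<And>\<phi>. (T has_vector_derivative - \<kappa> \<phi> *\<^sub>R \<nu> \<phi>) (at \<phi>)"
proof -
  obtain D where D: "D 0 = \<gamma>" "\<And>n x. (D n has_vector_derivative D (Suc n) x) (at x)"
    using assms(1) unfolding smooth_curve_def by blast
  have \<gamma>': "(\<gamma> has_vector_derivative D 1 \<phi>) (at \<phi>)" for \<phi>
    using D(2)[of 0 \<phi>] D(1) by simp
  then have "(\<lambda>s. vector_derivative \<gamma> (at s)) = D 1"
    using vector_derivative_at by blast
  moreover have "(D 1 has_vector_derivative D 2 \<phi>) (at \<phi>)" for \<phi>
    using D(2)[of 1 \<phi>] by (simp add: numeral_2_eq_2)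
  ultimately have "(D 1 has_vector_derivative - \<kappa> \<phi> *\<^sub>R \<nu> \<phi>) (at \<phi>)" for \<phi>
    using assms(2)[of \<phi>] vector_derivative_at by metis
  with \<gamma>' show ?thesis
    by (rule that)
qed

theorem lemma4p1:
  fixes \<gamma> \<nu> :: "real \<Rightarrow> real^2" and \<kappa> :: "real \<Rightarrow> real"
    and L M\<^sub>0 \<epsilon> :: real and u W :: "real^2 \<Rightarrow> real"
  assumes l_pos: "L > 0"
    and smooth: "smooth_curve \<gamma>"
    and periodic: "\<And>\<theta>. \<gamma> (\<theta> + L) = \<gamma> \<theta>"
    and simple: "inj_on \<gamma> {0..<L}"
    and arclength: "\<And>\<theta>. norm (vector_derivative \<gamma> (at \<theta>)) = 1"
    and nu_unit: "\<And>\<theta>. norm (\<nu> \<theta>) = 1"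
    and nu_normal: "\<And>\<theta>. \<nu> \<theta> \<bullet> vector_derivative \<gamma> (at \<theta>) = 0"
    and nu_outer: "\<And>\<theta>. \<exists>\<delta>>0. \<forall>s. 0 < s \<and> s < \<delta> \<longrightarrow>
                      \<gamma> \<theta> + s *\<^sub>R \<nu> \<theta> \<in> outside (\<gamma> ` {0..L})"
    and curvature: "\<And>\<theta>. vector_derivative (\<lambda>s. vector_derivative \<gamma> (at s)) (at \<theta>)
                        = - (\<kappa> \<theta>) *\<^sub>R \<nu> \<theta>"
    and M0_pos: "M\<^sub>0 > 0"
    and fermi_inj: "inj_on (\<lambda>(t, \<theta>). \<gamma> \<theta> + t *\<^sub>R \<nu> \<theta>) ({-M\<^sub>0<..<M\<^sub>0} \<times> {0..<L})"
    and fermi_jac: "\<And>t \<theta>. \<bar>t\<bar> < M\<^sub>0 \<Longrightarrow> 1 + \<kappa> \<theta> * t \<noteq> 0"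
    and u_C2: "C2_R2 u"
    and W_C1: "C1_R2 W"
    and pde: "\<And>y. - \<epsilon>\<^sup>2 * laplacian2 u y + (1 + \<epsilon>\<^sup>2 * W y) * u y - \<bar>u y\<bar>\<^sup>2 * u y = 0"
  shows "\<forall>M \<theta>. 0 < M \<and> M < M\<^sub>0 \<and> \<theta> \<in> {0..<L} \<longrightarrow>
    (let U = (\<lambda>t. fermi \<gamma> \<nu> u t \<theta>);
         Wf = (\<lambda>t. fermi \<gamma> \<nu> W t \<theta>);
         a = (\<lambda>t. 1 + \<kappa> \<theta> * t);
         ut = (\<lambda>t. deriv U t);
         Wt = (\<lambda>t. deriv Wf t);
         D = (\<lambda>t. deriv (\<lambda>\<phi>. deriv (\<lambda>\<psi>. fermi \<gamma> \<nu> u t \<psi>) \<phi> / (1 + \<kappa> \<phi> * t)) \<theta>)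
     in
     \<epsilon>\<^sup>2 * integral {-M..M} (\<lambda>t. a t * (ut t)\<^sup>2)
       + integral {-M..M} (\<lambda>t. a t * (1 + \<epsilon>\<^sup>2 * Wf t) * (U t)\<^sup>2)
       - integral {-M..M} (\<lambda>t. a t * (U t) ^ 4)
     = \<epsilon>\<^sup>2 * integral {-M..M} (\<lambda>t. U t * D t)
       + \<epsilon>\<^sup>2 * evalb (\<lambda>t. a t * U t * ut t) (-M) M
   \<and>
     \<epsilon>\<^sup>2 * integral {-M..M} (\<lambda>t. (a t)\<^sup>2 * Wt t * (U t)\<^sup>2)
       + 2 * \<kappa> \<theta> * integral {-M..M} (\<lambda>t. a t * (1 + \<epsilon>\<^sup>2 * Wf t) * (U t)\<^sup>2)
       - \<kappa> \<theta> * integral {-M..M} (\<lambda>t. a t * (U t) ^ 4)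
     = - 2 * \<epsilon>\<^sup>2 * integral {-M..M} (\<lambda>t. a t * ut t * D t)
       - \<epsilon>\<^sup>2 * evalb (\<lambda>t. (a t * ut t)\<^sup>2) (-M) M
       + evalb (\<lambda>t. (a t)\<^sup>2 * (1 + \<epsilon>\<^sup>2 * Wf t) * (U t)\<^sup>2) (-M) M
       - 1/2 * evalb (\<lambda>t. (a t)\<^sup>2 * \<bar>U t\<bar> ^ 4) (-M) M
   \<and>
     2 * \<epsilon>\<^sup>2 * \<kappa> \<theta> * integral {-M..M} (\<lambda>t. a t * (ut t)\<^sup>2)
       - \<epsilon>\<^sup>2 * integral {-M..M} (\<lambda>t. (a t)\<^sup>2 * Wt t * (U t)\<^sup>2)
       - \<kappa> \<theta> * integral {-M..M} (\<lambda>t. a t * (U t) ^ 4)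
     = 2 * \<epsilon>\<^sup>2 * integral {-M..M} (\<lambda>t. deriv (\<lambda>s. a s * U s) t * D t)
       + 2 * \<epsilon>\<^sup>2 * \<kappa> \<theta> * evalb (\<lambda>t. a t * U t * ut t) (-M) M
       + \<epsilon>\<^sup>2 * evalb (\<lambda>t. (a t * ut t)\<^sup>2) (-M) M
       - evalb (\<lambda>t. (a t)\<^sup>2 * (1 + \<epsilon>\<^sup>2 * Wf t) * (U t)\<^sup>2) (-M) M
       + 1/2 * evalb (\<lambda>t. (a t)\<^sup>2 * \<bar>U t\<bar> ^ 4) (-M) M)"
proof (intro allI impI, goal_cases)
  case (1 M \<theta>)
  then have M: "0 < M" "M < M\<^sub>0" and \<theta>: "\<theta> \<in> {0..L}"
    by auto
  obtain T where \<gamma>': "\<And>\<phi>. (\<gamma> has_vector_derivative T \<phi>) (at \<phi>)"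
    and T': "\<And>\<phi>. (T has_vector_derivative - \<kappa> \<phi> *\<^sub>R \<nu> \<phi>) (at \<phi>)"
    using smooth_curve_tangent[OF smooth curvature] by blast
  have T_unit: "\<And>\<phi>. norm (T \<phi>) = 1" and \<nu>_T: "\<And>\<phi>. \<nu> \<phi> \<bullet> T \<phi> = 0"
    using arclength nu_normal by (simp_all add: vector_derivative_at[OF \<gamma>'])
  interpret fermi_frame \<gamma> T \<nu> \<kappa> \<theta> "L/2"
    using l_pos \<gamma>' T' T_unit nu_unit \<nu>_T outer_normal_has_vector_derivative[OF l_pos M0_pos \<theta> \<gamma>' T'
        periodic simple T_unit nu_unit \<nu>_T nu_outer fermi_inj]
    by unfold_locales auto
  have jac: "1 + \<kappa> \<phi> * t \<noteq> 0" if "\<phi> \<in> ball \<theta> (L/2)" "t \<in> {-M..M}" for \<phi> t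
    using fermi_jac that M by auto
  have u_C1: "C1_R2 u"
    using u_C2 by (simp add: C2_R2_def)
  show ?case
    unfolding Let_def
  proof (rule weighted_energy_identities[where e = "\<epsilon>\<^sup>2"])
    show "- M \<le> M"
      using M by simp
    show "((\<lambda>s. fermi \<gamma> \<nu> u s \<theta>) has_real_derivative deriv (\<lambda>s. fermi \<gamma> \<nu> u s \<theta>) t) (at t)"
      and "(deriv (\<lambda>s. fermi \<gamma> \<nu> u s \<theta>) has_real_derivative deriv (deriv (\<lambda>s. fermi \<gamma> \<nu> u s \<theta>)) t) (at t)"
      and "((\<lambda>s. fermi \<gamma> \<nu> W s \<theta>) has_real_derivative deriv (\<lambda>s. fermi \<gamma> \<nu> W s \<theta>) t) (at t)"
      and "continuous_on {-M..M} (deriv (\<lambda>s. fermi \<gamma> \<nu> W s \<theta>))" for t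
      unfolding fermi_def by (intro C1_R2_along_line C2_R2_along_line u_C1 u_C2 W_C1)+
    show "continuous_on {-M..M} (\<lambda>t. deriv (\<lambda>\<phi>. deriv (\<lambda>\<psi>. fermi \<gamma> \<nu> u t \<psi>) \<phi> / (1 + \<kappa> \<phi> * t)) \<theta>)"
      by (rule continuous_on_tangential_derivative[OF u_C2 jac])
  qed (rule pde_along_normal[OF u_C2 jac pde])
qed

end
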